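(* Let $m,n$ be distinct positive integers with greatest common divisor $\ell$. Then in $\mathbb{Q}((T))$, $$\mathbf{B}(mT)\mathbf{B}(nT)=\mathbf{B}^2(\ell T)+mT\,\mathbf{B}(nT)\,g_{n,m}(e^T)+nT\,\mathbf{B}(mT)\,g_{m,n}(e^T).$$
   Context: $\mathbf{B}(T)=T/(e^T-1)\in\mathbb{Q}[[T]]$, $\mathbf{B}(cT)=cT/(e^{cT}-1)$ for $0\ne c\in\mathbb{Q}$, and $\mathbf{B}^2(\ell T)=(\mathbf{B}(\ell T))^2$. The polynomials $g_{m,n}\in\mathbb{Q}[X]$ are defined as follows. For distinct coprime positive integers $m,n$, $g_{m,n}$ and $g_{n,m}$ are the (unique) polynomials with $\deg g_{m,n}<m-1$ and $\deg g_{n,m}<n-1$ such that $$\frac{1}{(X-1)(1+X+\cdots+X^{m-1})(1+X+\cdots+X^{n-1})}=\frac{1}{mn(X-1)}+\frac{g_{n,m}}{1+X+\cdots+X^{n-1}}+\frac{g_{m,n}}{1+X+\cdots+X^{m-1}}$$ (so in particular $g_{1,m}=0$). For general distinct positive integers $m,n$ with greatest common divisor $\ell$, set $g_{n,m}=g_{n/\ell,m/\ell}(X^\ell)$ and $g_{m,n}=g_{m/\ell,n/\ell}(X^\ell)$. *)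

theory Defs
  imports "HOL-Computational_Algebra.Computational_Algebra"
begin

text \<open>B(cT) = cT/(e^{cT}-1) as a formal power series over the rationals
  (division in fps is exact here since e^{cT}-1 has subdegree 1 for c nonzero).\<close>
definition Bfps :: "rat \<Rightarrow> rat fps" where
  "Bfps c = (fps_const c * fps_X) / (fps_exp c - 1)"

definition Psum :: "nat \<Rightarrow> rat poly" where
  "Psum k = (\<Sum>i<k. monom 1 i)"

definition deg_lt :: "rat poly \<Rightarrow> nat \<Rightarrow> bool" where
  "deg_lt p k \<longleftrightarrow> p = 0 \<or> degree p < k"

text \<open>For coprime a, b: the pair (g_{a,b}, g_{b,a}) characterised by the partial fraction
  identity 1/((X-1)P_a P_b) = 1/(ab(X-1)) + g_{b,a}/P_b + g_{a,b}/P_a, written after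
  multiplication by the nonzero polynomial (X-1) P_a P_b.\<close>
definition g_pair :: "nat \<Rightarrow> nat \<Rightarrow> rat poly \<times> rat poly" where
  "g_pair a b = (THE p. deg_lt (fst p) (a - 1) \<and> deg_lt (snd p) (b - 1) \<and>
      1 = smult (1 / (of_nat a * of_nat b)) (Psum a * Psum b)
          + snd p * [:-1, 1:] * Psum a + fst p * [:-1, 1:] * Psum b)"

definition g_cop :: "nat \<Rightarrow> nat \<Rightarrow> rat poly" where
  "g_cop a b = fst (g_pair a b)"

definition gpoly :: "nat \<Rightarrow> nat \<Rightarrow> rat poly" where
  "gpoly m n = (let l = gcd m n in pcompose (g_cop (m div l) (n div l)) (monom 1 l))"

definition eval_expT :: "rat poly \<Rightarrow> rat fps" where
  "eval_expT p = poly (map_poly fps_const p) (fps_exp 1)"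

end

theory Submission
  imports Defs "HOL-Computational_Algebra.Field_as_Ring"
begin

text \<open>Write \<open>l = gcd m n\<close>, \<open>m = l a\<close>, \<open>n = l b\<close> and \<open>Y = e\<^sup>l\<^sup>T\<close>. Since
  \<open>e\<^sup>m\<^sup>T - 1 = (Y - 1) P\<^sub>a(Y)\<close> and \<open>e\<^sup>n\<^sup>T - 1 = (Y - 1) P\<^sub>b(Y)\<close>, evaluating the
  partial fraction identity that defines \<open>g\<^sub>a\<^sub>,\<^sub>b\<close>, \<open>g\<^sub>b\<^sub>,\<^sub>a\<close> at \<open>X = Y\<close> and
  multiplying it by \<open>mnT\<^sup>2/(Y - 1)\<close> turns its three terms into \<open>B(mT) B(nT)\<close>,
  \<open>B\<^sup>2(lT)\<close> and the two correction terms, as \<open>mn/(ab) = l\<^sup>2\<close>. The pair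
  \<open>(g\<^sub>a\<^sub>,\<^sub>b, g\<^sub>b\<^sub>,\<^sub>a)\<close> exists and is unique because \<open>P\<^sub>a\<close> and \<open>P\<^sub>b\<close> are coprime
  in \<open>\<rat>[X]\<close> when \<open>a\<close> and \<open>b\<close> are.\<close>

lemma Psum_mult_X_minus_1: "Psum k * [:-1, 1:] = monom 1 k - 1"
proof (induction k)
  case 0
  show ?case by (simp add: Psum_def)
next
  case (Suc k)
  have "[:-1, 1:] = (monom 1 1 - 1 :: rat poly)"
    by (simp add: poly_eq_iff coeff_monom coeff_pCons split: nat.split)
  then have "Psum (Suc k) * [:-1, 1:] = Psum k * [:-1, 1:] + monom 1 k * (monom 1 1 - 1)"
    by (simp add: Psum_def distrib_right)
  also have "\<dots> = monom 1 (Suc k) - 1"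
    using Suc by (simp add: right_diff_distrib mult_monom)
  finally show ?case .
qed

lemma coeff_Psum: "coeff (Psum k) i = (if i < k then 1 else 0)"
  by (simp add: Psum_def coeff_sum coeff_monom)

lemma poly_Psum_1: "poly (Psum k) 1 = of_nat k"
  by (simp add: Psum_def poly_sum poly_monom)

lemma Psum_eq_0_iff: "Psum k = 0 \<longleftrightarrow> k = 0"
  using poly_Psum_1[of k] by (auto simp: Psum_def)

lemma degree_Psum: "degree (Psum k) = k - 1"
proof (cases "k = 0")
  case False
  show ?thesis
  proof (rule antisym)
    show "degree (Psum k) \<le> k - 1" by (rule degree_le) (auto simp: coeff_Psum)
    show "k - 1 \<le> degree (Psum k)" by (rule le_degree) (use False in \<open>simp add: coeff_Psum\<close>)
  qed
qed (simp add: Psum_def)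

lemma Psum_Suc_shift: "Psum (Suc k) = 1 + monom 1 1 * Psum k"
  by (auto simp: poly_eq_iff coeff_Psum coeff_monom_mult)

lemma Psum_dvd_Psum_mult: "Psum a dvd Psum (a * s)"
proof -
  have "Psum (a * s) * [:-1, 1:] = (monom 1 a) ^ s - 1"
    unfolding Psum_mult_X_minus_1 by (simp add: monom_power mult.commute)
  also have "\<dots> = (monom 1 a - 1) * (\<Sum>i<s. (monom 1 a) ^ i)"
    by (rule power_diff_1_eq)
  also have "\<dots> = Psum a * (\<Sum>i<s. (monom 1 a) ^ i) * [:-1, 1:]"
    by (simp add: Psum_mult_X_minus_1[symmetric] algebra_simps)
  finally have "Psum (a * s) = Psum a * (\<Sum>i<s. (monom 1 a) ^ i)"
    using mult_right_cancel[of "[:-1, 1:] :: rat poly"] by simp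
  then show ?thesis ..
qed

text \<open>If \<open>a s = b t + 1\<close> then \<open>P\<^sub>a\<close> and \<open>P\<^sub>b\<close> divide \<open>P\<^sub>a\<^sub>s\<close> and
  \<open>P\<^sub>b\<^sub>t\<close>, which differ by the unit \<open>1 = P\<^sub>a\<^sub>s - X P\<^sub>b\<^sub>t\<close>.\<close>
lemma coprime_Psum:
  assumes "coprime a b"
  shows "coprime (Psum a) (Psum b)"
proof (cases "a = 0")
  case True
  with assms have "b = 1" by simp
  then show ?thesis by (simp add: Psum_def)
next
  case False
  with assms obtain s t where "a * s = b * t + 1"
    using bezout_nat[of a b] by auto
  then have "Psum (a * s) - monom 1 1 * Psum (b * t) = 1"
    by (simp add: Psum_Suc_shift)
  show ?thesis
  proof (rule coprimeI)
    fix c assume "c dvd Psum a" "c dvd Psum b"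
    then have "c dvd Psum (a * s) - monom 1 1 * Psum (b * t)"
      using Psum_dvd_Psum_mult dvd_trans by (metis dvd_diff dvd_mult)
    then show "is_unit c"
      using \<open>Psum (a * s) - monom 1 1 * Psum (b * t) = 1\<close> by simp
  qed
qed

lemma coprime_poly_decomposition_exists:
  fixes P Q R :: "'a::field_gcd poly"
  assumes "coprime P Q" and "P \<noteq> 0" and "R = 0 \<or> degree R < degree P + degree Q"
  shows "\<exists>g h. (g = 0 \<or> degree g < degree P) \<and> (h = 0 \<or> degree h < degree Q)
           \<and> h * P + g * Q = R"
proof -
  obtain u v where uv: "u * P + v * Q = 1"
    using bezout_coefficients_fst_snd[of P Q] assms(1) by (auto simp: coprime_iff_gcd_eq_1)
  define g where "g = (R * v) mod P"
  define h where "h = R * u + (R * v div P) * Q"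
  have g: "g = 0 \<or> degree g < degree P"
    using degree_mod_less[OF assms(2)] by (simp add: g_def)
  have hg: "h * P + g * Q = R"
  proof -
    have "R * v = (R * v div P) * P + g" by (simp add: g_def)
    then have "h * P + g * Q = R * (u * P + v * Q)"
      unfolding h_def by algebra
    with uv show ?thesis by simp
  qed
  have "h = 0 \<or> degree h < degree Q"
  proof (cases "h = 0")
    case False
    have "g * Q = 0 \<or> degree (g * Q) < degree P + degree Q"
      using g by (cases "Q = 0 \<or> g = 0") (auto simp: degree_mult_eq)
    then have "R - g * Q = 0 \<or> degree (R - g * Q) < degree P + degree Q"
      using assms(3) degree_diff_le_max[of R "g * Q"] by auto
    moreover have "R - g * Q = h * P" using hg by (simp add: algebra_simps)
    ultimately show ?thesis using False assms(2) by (simp add: degree_mult_eq)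
  qed simp
  with g hg show ?thesis by blast
qed

lemma coprime_poly_decomposition_unique:
  fixes P Q g h g' h' :: "'a::field_gcd poly"
  assumes "coprime P Q" and "P \<noteq> 0" and "h * P + g * Q = h' * P + g' * Q"
    and "g = 0 \<or> degree g < degree P" and "g' = 0 \<or> degree g' < degree P"
  shows "g = g'" and "h = h'"
proof -
  have swap: "(g - g') * Q = (h' - h) * P"
    using assms(3) by (simp add: algebra_simps)
  then have "P dvd g - g'"
    using assms(1) coprime_dvd_mult_left_iff[of P Q "g - g'"] by (simp add: ac_simps)
  moreover have "g - g' = 0 \<or> degree (g - g') < degree P"
    using assms(4,5) degree_diff_le_max[of g g'] by auto
  ultimately show "g = g'"
    using dvd_imp_degree_le[of P "g - g'"] by force
  with swap assms(2) show "h = h'" by simp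
qed

definition is_g_pair :: "nat \<Rightarrow> nat \<Rightarrow> rat poly \<Rightarrow> rat poly \<Rightarrow> bool" where
  "is_g_pair a b g h \<longleftrightarrow> deg_lt g (a - 1) \<and> deg_lt h (b - 1) \<and>
      1 = smult (1 / (of_nat a * of_nat b)) (Psum a * Psum b)
          + h * [:-1, 1:] * Psum a + g * [:-1, 1:] * Psum b"

lemma g_pair_eq_The: "g_pair a b = (THE p. is_g_pair a b (fst p) (snd p))"
  by (simp add: g_pair_def is_g_pair_def)

lemma is_g_pair_swap: "is_g_pair a b g h \<Longrightarrow> is_g_pair b a h g"
  unfolding is_g_pair_def by (simp add: ac_simps)

lemma is_g_pair_iff:
  "is_g_pair a b g h \<longleftrightarrow> (g = 0 \<or> degree g < degree (Psum a)) \<and> (h = 0 \<or> degree h < degree (Psum b))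
     \<and> [:-1, 1:] * (h * Psum a + g * Psum b) = 1 - smult (1 / (of_nat a * of_nat b)) (Psum a * Psum b)"
proof -
  have "\<And>y s :: rat poly. (1 = s + h * y * Psum a + g * y * Psum b)
          \<longleftrightarrow> y * (h * Psum a + g * Psum b) = 1 - s"
    by (auto simp: algebra_simps)
  then show ?thesis
    unfolding is_g_pair_def deg_lt_def degree_Psum by (simp only:)
qed

lemma ex1_is_g_pair:
  assumes "0 < a" and "0 < b" and "coprime a b"
  shows "\<exists>!p. is_g_pair a b (fst p) (snd p)"
proof -
  define F where "F = 1 - smult (1 / (of_nat a * of_nat b)) (Psum a * Psum b)"
  have cop: "coprime (Psum a) (Psum b)" and Pa: "Psum a \<noteq> 0"
    using assms by (simp_all add: coprime_Psum Psum_eq_0_iff)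
  have "poly F 1 = 0"
    using assms by (simp add: F_def poly_Psum_1)
  then obtain R where R: "F = [:-1, 1:] * R"
    by (auto simp: poly_eq_0_iff_dvd elim: dvdE)
  have "R = 0 \<or> degree R < degree (Psum a) + degree (Psum b)"
  proof (cases "R = 0")
    case False
    have "degree F \<le> degree (Psum a) + degree (Psum b)"
      unfolding F_def using degree_diff_le_max[of 1] degree_mult_le[of "Psum a" "Psum b"]
      by (metis degree_1 degree_smult_le le_trans max_def zero_le)
    moreover have "degree F = Suc (degree R)"
      unfolding R using False by (subst degree_mult_eq) auto
    ultimately show ?thesis by simp
  qed simp
  then obtain g h where gh: "(g = 0 \<or> degree g < degree (Psum a))" "(h = 0 \<or> degree h < degree (Psum b))"
    "h * Psum a + g * Psum b = R"
    using coprime_poly_decomposition_exists[OF cop Pa] by blast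
  show ?thesis
  proof (rule ex1I)
    show "is_g_pair a b (fst (g, h)) (snd (g, h))"
      using gh by (simp add: is_g_pair_iff F_def[symmetric] R)
  next
    fix p assume "is_g_pair a b (fst p) (snd p)"
    then have "snd p * Psum a + fst p * Psum b = h * Psum a + g * Psum b"
      and "fst p = 0 \<or> degree (fst p) < degree (Psum a)"
      using gh by (simp_all add: is_g_pair_iff F_def[symmetric] R del: mult_pCons_left)
    then show "p = (g, h)"
      using coprime_poly_decomposition_unique[OF cop Pa] gh(1) by (metis prod.collapse)
  qed
qed

lemma is_g_pair_g_pair:
  assumes "0 < a" and "0 < b" and "coprime a b"
  shows "is_g_pair a b (fst (g_pair a b)) (snd (g_pair a b))"
  unfolding g_pair_eq_The using ex1_is_g_pair[OF assms] by (rule theI')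

lemma g_pair_swap:
  assumes "0 < a" and "0 < b" and "coprime a b"
  shows "g_pair b a = (snd (g_pair a b), fst (g_pair a b))"
proof -
  have "\<exists>!p. is_g_pair b a (fst p) (snd p)"
    using assms by (simp add: ex1_is_g_pair coprime_commute)
  with is_g_pair_swap[OF is_g_pair_g_pair[OF assms]] show ?thesis
    unfolding g_pair_eq_The by (metis (no_types, lifting) fst_conv snd_conv the1_equality)
qed

definition poly_fps :: "'a::comm_ring_1 poly \<Rightarrow> 'a fps \<Rightarrow> 'a fps" where
  "poly_fps p Y = poly (map_poly fps_const p) Y"

lemma poly_fps_pCons [simp]: "poly_fps (pCons a p) Y = fps_const a + Y * poly_fps p Y"
  by (simp add: poly_fps_def map_poly_pCons)

lemma poly_fps_0 [simp]: "poly_fps 0 Y = 0"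
  by (simp add: poly_fps_def)

lemma poly_fps_1 [simp]: "poly_fps 1 Y = 1"
  by (simp add: poly_fps_def)

lemma poly_fps_add [simp]: "poly_fps (p + q) Y = poly_fps p Y + poly_fps q Y"
  by (induction p q rule: poly_induct2) (simp_all add: algebra_simps)

lemma poly_fps_smult [simp]: "poly_fps (smult c p) Y = fps_const c * poly_fps p Y"
  by (induction p) (simp_all add: algebra_simps)

lemma poly_fps_mult [simp]: "poly_fps (p * q) Y = poly_fps p Y * poly_fps q Y"
  by (induction p) (simp_all add: algebra_simps)

lemma poly_fps_minus [simp]: "poly_fps (- p) Y = - poly_fps p Y"
  by (induction p) (simp_all add: algebra_simps)

lemma poly_fps_diff [simp]: "poly_fps (p - q) Y = poly_fps p Y - poly_fps q Y"
  using poly_fps_add[of p "- q" Y] by simp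

lemma poly_fps_monom_1 [simp]: "poly_fps (monom 1 k) Y = Y ^ k"
  by (simp add: poly_fps_def map_poly_monom poly_monom)

lemma poly_fps_pcompose_monom: "poly_fps (pcompose p (monom 1 l)) Y = poly_fps p (Y ^ l)"
  by (induction p) (simp_all add: pcompose_pCons)

lemma poly_fps_Psum: "poly_fps (Psum k) Y * (Y - 1) = Y ^ k - 1"
  using arg_cong[OF Psum_mult_X_minus_1, of "\<lambda>p. poly_fps p Y"] by (simp add: algebra_simps)

lemma poly_fps_is_g_pair:
  assumes "is_g_pair a b g h"
  shows "fps_const (1 / (of_nat a * of_nat b)) * poly_fps (Psum a) Y * poly_fps (Psum b) Y
      + poly_fps h Y * (Y - 1) * poly_fps (Psum a) Y + poly_fps g Y * (Y - 1) * poly_fps (Psum b) Y = 1"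
  using arg_cong[OF conjunct2[OF conjunct2[OF assms[unfolded is_g_pair_def]]], of "\<lambda>p. poly_fps p Y"]
  by (simp add: algebra_simps)

lemma eval_expT_pcompose_monom:
  "eval_expT (pcompose p (monom 1 l)) = poly_fps p (fps_exp (of_nat l))"
  using poly_fps_pcompose_monom[of p l "fps_exp 1"]
  by (simp add: eval_expT_def poly_fps_def fps_exp_power_mult)

lemma fps_const_mult_X_eq_0_iff: "fps_const (c :: 'a::comm_ring_1) * fps_X = 0 \<longleftrightarrow> c = 0"
proof
  assume "fps_const c * fps_X = 0"
  then have "(fps_const c * fps_X) $ 1 = 0" by simp
  then show "c = 0" by simp
qed simp

lemma Bfps_mult_exp_minus_1:
  assumes "c \<noteq> 0"
  shows "Bfps c * (fps_exp c - 1) = fps_const c * fps_X"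
proof -
  have "(fps_exp c - 1) $ 1 \<noteq> 0" using assms by simp
  then have "fps_exp c - 1 \<noteq> 0" and "subdegree (fps_exp c - 1) \<le> 1"
    by (auto intro: subdegree_leI)
  moreover have "1 \<le> subdegree (fps_const c * fps_X)"
    using assms by (intro subdegree_geI) (auto simp: fps_eq_iff)
  ultimately show ?thesis
    unfolding Bfps_def by (simp add: fps_times_divide_eq)
qed

lemma Bfps_mult_Psum:
  assumes "0 < l" and "0 < k"
  defines "Y \<equiv> fps_exp (of_nat l)"
  shows "Bfps (of_nat (l * k)) * (poly_fps (Psum k) Y * (Y - 1)) = fps_const (of_nat (l * k)) * fps_X"
proof -
  have "poly_fps (Psum k) Y * (Y - 1) = fps_exp (of_nat (l * k)) - 1"
    unfolding poly_fps_Psum Y_def fps_exp_power_mult by (simp add: mult.commute)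
  then show ?thesis
    using Bfps_mult_exp_minus_1[of "of_nat (l * k)"] assms by simp
qed

lemma product_from_partial_fractions:
  fixes Bm Bn Bl Pa Pb Z H G ym yn c :: "'a::idom"
  assumes Bm: "Bm * (Pa * Z) = ym" and Bn: "Bn * (Pb * Z) = yn"
    and Bl: "(Bl * Z)\<^sup>2 = ym * yn * c"
    and pf: "c * Pa * Pb + H * Z * Pa + G * Z * Pb = 1"
    and "ym \<noteq> 0" and "yn \<noteq> 0"
  shows "Bm * Bn = Bl\<^sup>2 + ym * Bn * H + yn * Bm * G"
proof -
  define K where "K = Pa * Pb * Z\<^sup>2"
  have "K \<noteq> 0"
    using Bm Bn \<open>ym \<noteq> 0\<close> \<open>yn \<noteq> 0\<close> by (auto simp: K_def)
  have "Bm * Bn * K = (Bm * (Pa * Z)) * (Bn * (Pb * Z))"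
    by (simp add: K_def power2_eq_square ac_simps)
  also have "\<dots> = ym * yn" by (simp add: Bm Bn)
  also have "\<dots> = ym * yn * (c * Pa * Pb + H * Z * Pa + G * Z * Pb)" by (simp add: pf)
  also have "\<dots> = (ym * yn * c) * Pa * Pb + ym * H * Z * Pa * yn + yn * G * Z * Pb * ym"
    by (simp add: algebra_simps)
  also have "\<dots> = (Bl * Z)\<^sup>2 * Pa * Pb + ym * H * Z * Pa * (Bn * (Pb * Z)) + yn * G * Z * Pb * (Bm * (Pa * Z))"
    by (simp only: Bl Bm Bn)
  also have "\<dots> = (Bl\<^sup>2 + ym * Bn * H + yn * Bm * G) * K"
    by (simp add: K_def power2_eq_square algebra_simps)
  finally show ?thesis
    using \<open>K \<noteq> 0\<close> by simp
qed

theorem mainTheorem4: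
  fixes m n :: nat
  assumes "0 < m" and "0 < n" and "m \<noteq> n"
  shows "Bfps (of_nat m) * Bfps (of_nat n) =
           (Bfps (of_nat (gcd m n)))\<^sup>2
         + fps_const (of_nat m) * fps_X * Bfps (of_nat n) * eval_expT (gpoly n m)
         + fps_const (of_nat n) * fps_X * Bfps (of_nat m) * eval_expT (gpoly m n)"
proof -
  define l a b where "l = gcd m n" and "a = m div l" and "b = n div l"
  have m: "m = l * a" and n: "n = l * b" and "0 < l"
    using assms by (simp_all add: a_def b_def l_def)
  have ab: "0 < a" "0 < b" "coprime a b"
    using assms div_gcd_coprime[of m n] by (simp_all add: m n) (simp add: a_def b_def l_def)
  define G H Y where "G = fst (g_pair a b)" and "H = snd (g_pair a b)" and "Y = fps_exp (of_nat l :: rat)"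
  have "gpoly m n = pcompose G (monom 1 l)" and "gpoly n m = pcompose H (monom 1 l)"
    using g_pair_swap[OF ab]
    by (simp_all add: gpoly_def g_cop_def Let_def G_def H_def a_def b_def l_def gcd.commute)
  then have eval: "eval_expT (gpoly m n) = poly_fps G Y" "eval_expT (gpoly n m) = poly_fps H Y"
    by (simp_all add: eval_expT_pcompose_monom Y_def)
  have "(of_nat l :: rat)\<^sup>2 = of_nat m * of_nat n * (1 / (of_nat a * of_nat b))"
    using ab by (simp add: m n power2_eq_square)
  then have "(Bfps (of_nat l) * (Y - 1))\<^sup>2
      = fps_const (of_nat m) * fps_X * (fps_const (of_nat n) * fps_X) * fps_const (1 / (of_nat a * of_nat b))"
    using Bfps_mult_exp_minus_1[of "of_nat l"] \<open>0 < l\<close>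
    by (simp add: Y_def power_mult_distrib fps_const_power power2_eq_square ac_simps)
  from product_from_partial_fractions[OF Bfps_mult_Psum[OF \<open>0 < l\<close> \<open>0 < a\<close>, folded m Y_def]
      Bfps_mult_Psum[OF \<open>0 < l\<close> \<open>0 < b\<close>, folded n Y_def] this
      poly_fps_is_g_pair[OF is_g_pair_g_pair[OF ab], folded G_def H_def]]
  show ?thesis
    using assms by (simp add: eval l_def fps_const_mult_X_eq_0_iff)
qed

end
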